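(* Let $T\in M_m(\mathbb F_2)$ have primitive characteristic polynomial $f_T=\sum_{i=0}^m c_i\lambda^i$, and let $S=\langle a_0,\dots,a_{n-1}\rangle\in\mathbb F_2^n$ with $a_0\ne0$; set $f_S=a_0+a_1\lambda+\dots+a_{n-1}\lambda^{n-1}$ and $Q=\sum_{i=0}^m c_i\lambda^{ni}f_S^{m-i}$. Suppose $Q$ is irreducible over $\mathbb F_2$, let $K$ be its splitting field, $\mu\in K$ a root of $Q$, and $L$ the splitting field of $f_T$. Then for every prime $p$ dividing $|L^*|$ (and $|K^*|$), $\mu^{|K^*|/p}\ne1$. Consequently $Q$ is primitive if and only if $\mu^{|K^*|/p}\neq 1$ for every prime $p$ dividing $|K^*|$ but not $|L^*|$.
   Context: A polynomial over $\mathbb F_2$ is primitive if it is irreducible and its roots generate the multiplicative group of its splitting field. The polynomial $Q$ is the characteristic polynomial of the linear map $(v_0,\dots,v_{n-1})\mapsto(v_1,\dots,v_{n-1},T(a_0v_0+\dots+a_{n-1}v_{n-1}))$ on $(\mathbb F_2^m)^n$. *)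

theory Defs
  imports "HOL-Library.Z2" "HOL-Computational_Algebra.Polynomial" "HOL-Computational_Algebra.Factorial_Ring"
    "Jordan_Normal_Form.Char_Poly"
begin

text \<open>The canonical map from F_2 (type bit) into a field; a ring homomorphism when the
  field has characteristic 2.\<close>
definition F2_emb :: "bit \<Rightarrow> 'k::field" where
  "F2_emb b = (if b = 0 then 0 else 1)"

definition is_subfield :: "'k::field set \<Rightarrow> bool" where
  "is_subfield S \<longleftrightarrow> 0 \<in> S \<and> 1 \<in> S \<and> (\<forall>x\<in>S. \<forall>y\<in>S. x + y \<in> S \<and> x * y \<in> S)
     \<and> (\<forall>x\<in>S. - x \<in> S \<and> inverse x \<in> S)"

text \<open>The type 'k (a field of characteristic 2, hence an extension of F_2) is a splitting
  field of f over F_2: f splits into linear factors over 'k, and 'k is generated (over its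
  prime field F_2) by the roots of f.\<close>
definition splitting_field_F2 :: "bit poly \<Rightarrow> 'k::field itself \<Rightarrow> bool" where
  "splitting_field_F2 f K \<longleftrightarrow> CHAR('k) = 2 \<and>
     (\<exists>rs::'k list. map_poly F2_emb f = Polynomial.smult (F2_emb (lead_coeff f)) (\<Prod>r\<leftarrow>rs. [:- r, 1:])) \<and>
     (\<forall>S::'k set. is_subfield S \<and> {r. poly (map_poly F2_emb f) r = 0} \<subseteq> S \<longrightarrow> S = UNIV)"

definition primitive_F2 :: "bit poly \<Rightarrow> 'k::field itself \<Rightarrow> bool" where
  "primitive_F2 f K \<longleftrightarrow> irreducible f \<and>
     (\<forall>\<mu>::'k. poly (map_poly F2_emb f) \<mu> = 0 \<longrightarrow> (\<forall>y::'k. y \<noteq> 0 \<longrightarrow> (\<exists>k::nat. y = \<mu> ^ k)))"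

end

theory Submission
  imports Defs
begin

text \<open>Put \<open>q = 2^m\<close>, so that \<open>|L| = q\<close> and, as \<open>deg Q = n m\<close>, \<open>|K| = q^n\<close>.
  Since \<open>Q(\<lambda>) = f\<^sub>S(\<lambda>)^m f\<^sub>T(\<lambda>^n / f\<^sub>S(\<lambda>))\<close>, the element
  \<open>\<gamma> = \<mu>^n / f\<^sub>S(\<mu>)\<close> of \<open>K\<close> is a root of \<open>f\<^sub>T\<close>; hence \<open>\<gamma>^q = \<gamma>\<close>, and \<open>\<gamma>\<close>
  has the same multiplicative order \<open>q - 1\<close> as the primitive roots of \<open>f\<^sub>T\<close> in \<open>L\<close>.
  The monic polynomial \<open>X^n + \<gamma> f\<^sub>S(X)\<close> has coefficients fixed by \<open>x \<mapsto> x^q\<close>, so it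
  vanishes at the \<open>n\<close> distinct conjugates \<open>\<mu>^(q^j)\<close>, \<open>j < n\<close>, and comparing constant terms
  gives \<open>\<gamma> = \<mu>^N\<close> with \<open>N = 1 + q + \<dots> + q^(n-1) = |K\<^sup>*| / |L\<^sup>*|\<close>. For a prime \<open>p\<close>
  dividing \<open>q - 1\<close> this yields \<open>\<mu>^(|K\<^sup>*|/p) = \<gamma>^((q-1)/p) \<noteq> 1\<close>. The equivalence is then
  the usual criterion that a nonzero \<open>\<mu>\<close> generates \<open>K\<^sup>*\<close> iff \<open>\<mu>^(|K\<^sup>*|/p) \<noteq> 1\<close> for all
  primes \<open>p\<close> dividing \<open>|K\<^sup>*|\<close>, together with the fact that all roots of the irreducible
  \<open>Q\<close> have the same order.\<close>

section \<open>Evaluating polynomials over \<open>\<bbbF>\<^sub>2\<close> in fields of characteristic 2\<close>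

abbreviation eval_F2 :: "bit poly \<Rightarrow> 'k::field \<Rightarrow> 'k" where
  "eval_F2 p x \<equiv> poly (map_poly F2_emb p) x"

lemma F2_emb_simps [simp]: "F2_emb 0 = 0" "F2_emb 1 = 1"
  by (simp_all add: F2_emb_def)

lemma F2_emb_eq_0_iff [simp]: "F2_emb b = 0 \<longleftrightarrow> b = 0"
  by (simp add: F2_emb_def)

lemma F2_emb_power [simp]: "0 < k \<Longrightarrow> F2_emb b ^ k = F2_emb b"
  by (simp add: F2_emb_def)

lemma degree_map_poly_F2_emb [simp]: "degree (map_poly F2_emb p) = degree p"
  by (rule degree_map_poly) simp

lemma eval_F2_monom: "eval_F2 (monom c i) x = F2_emb c * x ^ i"
  by (simp add: map_poly_monom poly_monom)

lemma eval_F2_0_point: "eval_F2 p 0 = F2_emb (coeff p 0)"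
  by (simp add: poly_0_coeff_0 coeff_map_poly)

lemma CHAR_2_add_self:
  assumes "CHAR('a::ring_1) = 2"
  shows "(x::'a) + x = 0"
  by (metis add.right_inverse uminus_CHAR_2[OF assms])

lemma Frobenius_add:
  assumes "CHAR('a::comm_semiring_1) = 2"
  shows "((x::'a) + y) ^ 2 ^ k = x ^ 2 ^ k + y ^ 2 ^ k"
  by (rule freshmans_dream') (simp_all add: assms)

lemma Frobenius_sum:
  assumes "CHAR('a::comm_semiring_1) = 2"
  shows "(\<Sum>i\<in>A. f i :: 'a) ^ 2 ^ k = (\<Sum>i\<in>A. f i ^ 2 ^ k)"
  by (rule freshmans_dream_sum') (simp_all add: assms)

lemma field_hom_F2_emb:
  assumes "CHAR('k::field) = 2"
  shows "field_hom (F2_emb :: bit \<Rightarrow> 'k)"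
proof
  fix x y :: bit
  show "F2_emb (x + y) = (F2_emb x + F2_emb y :: 'k)"
    using CHAR_2_add_self[OF assms, of 1] by (cases x; cases y) simp_all
  show "F2_emb (x * y) = (F2_emb x * F2_emb y :: 'k)"
    by (cases x; cases y) simp_all
qed simp_all

lemma irreducible_degree_pos: "irreducible (p :: 'a::field poly) \<Longrightarrow> 0 < degree p"
  by (simp flip: irreducible_connect_field add: irreducible\<^sub>d_def)

context
  assumes char2: "CHAR('k::field) = 2"
begin

interpretation F2_emb: map_poly_idom_hom "F2_emb :: bit \<Rightarrow> 'k"
  using field_hom_F2_emb[OF char2] unfolding field_hom_def map_poly_idom_hom_def .

lemma eval_F2_diff: "eval_F2 (p - q) (x::'k) = eval_F2 p x - eval_F2 q x"
  by (simp add: F2_emb.hom_minus)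

lemma eval_F2_mult: "eval_F2 (p * q) (x::'k) = eval_F2 p x * eval_F2 q x"
  by (simp add: F2_emb.hom_mult)

lemma eval_F2_power: "eval_F2 (p ^ k) (x::'k) = eval_F2 p x ^ k"
  by (simp add: F2_emb.hom_power)

lemma eval_F2_sum: "eval_F2 (\<Sum>i\<in>A. f i) (x::'k) = (\<Sum>i\<in>A. eval_F2 (f i) x)"
  by (simp add: F2_emb.hom_sum poly_sum)

lemma eval_F2_smult: "eval_F2 (Polynomial.smult c p) (x::'k) = F2_emb c * eval_F2 p x"
  by (simp add: map_poly_smult F2_emb.base.hom_mult)

lemma eval_F2_Frobenius: "eval_F2 p (x ^ 2 ^ k) = eval_F2 p (x::'k) ^ 2 ^ k"
  by (simp add: poly_altdef coeff_map_poly Frobenius_sum[OF char2] power_mult_distrib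
      mult.commute flip: power_mult)

lemma eval_F2_eq_0_iff_dvd:
  assumes irr: "irreducible P" and root: "eval_F2 P (x::'k) = 0"
  shows "eval_F2 g x = 0 \<longleftrightarrow> P dvd g"
proof
  assume "P dvd g"
  then show "eval_F2 g x = 0" using root by (auto simp: eval_F2_mult elim!: dvdE)
next
  assume g: "eval_F2 g x = 0"
  obtain m where m: "eval_F2 m x = 0" "m \<noteq> 0"
    and least: "\<And>h. eval_F2 h x = 0 \<Longrightarrow> h \<noteq> 0 \<Longrightarrow> degree m \<le> degree h"
    using ex_has_least_nat[of "\<lambda>h. eval_F2 h x = 0 \<and> h \<noteq> 0" P degree] root irr
    by (auto simp: irreducible_def)
  have m_dvd: "m dvd h" if h: "eval_F2 h x = 0" for h
  proof (rule ccontr)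
    assume "\<not> m dvd h"
    then have "h mod m \<noteq> 0" by (simp add: mod_eq_0_iff_dvd)
    moreover have "eval_F2 (h mod m) x = 0"
      using h m by (simp add: eval_F2_diff eval_F2_mult flip: minus_div_mult_eq_mod)
    ultimately have "degree m \<le> degree (h mod m)" by (rule least[rotated])
    moreover have "degree (h mod m) < degree m" using degree_mod_less' \<open>h mod m \<noteq> 0\<close> m by blast
    ultimately show False by simp
  qed
  have "\<not> is_unit m"
  proof
    assume "is_unit m"
    then have "degree m = 0" using m(2) by (simp add: is_unit_iff_degree)
    then have "map_poly F2_emb m = [:F2_emb (coeff m 0):]" and "coeff m 0 \<noteq> 0"
      using degree_0_id[of "map_poly F2_emb m", symmetric] leading_coeff_0_iff[of m] m(2)
      by (simp_all add: coeff_map_poly)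
    then show False using m(1) by (metis F2_emb_eq_0_iff poly_const_conv)
  qed
  then have "P dvd m" using m_dvd[OF root] irr by (auto simp: irreducible_altdef)
  then show "P dvd g" using m_dvd[OF g] by (rule dvd_trans)
qed

lemma eval_F2_X_power_minus_1: "eval_F2 (monom 1 e - 1) (x::'k) = x ^ e - 1"
  by (simp add: eval_F2_diff eval_F2_monom poly_monom)

end

lemma power_eq_1_iff_of_common_root:
  assumes "CHAR('a::field) = 2" and "CHAR('b::field) = 2" and "irreducible P"
    and "eval_F2 P (x::'a) = 0" and "eval_F2 P (y::'b) = 0"
  shows "x ^ e = 1 \<longleftrightarrow> y ^ e = 1"
proof -
  have "x ^ e = 1 \<longleftrightarrow> P dvd monom 1 e - 1"
    using eval_F2_eq_0_iff_dvd[OF assms(1,3,4), of "monom 1 e - 1"]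
    by (simp add: eval_F2_X_power_minus_1[OF assms(1)])
  also have "\<dots> \<longleftrightarrow> y ^ e = 1"
    using eval_F2_eq_0_iff_dvd[OF assms(2,3,5), of "monom 1 e - 1"]
    by (simp add: eval_F2_X_power_minus_1[OF assms(2)])
  finally show ?thesis .
qed


section \<open>Extensions of \<open>\<bbbF>\<^sub>2\<close> generated by a root\<close>

lemma power_card_nonzero_eq_1:
  fixes S :: "'k::field set"
  assumes fin: "finite S" and mult: "\<And>a b. a \<in> S \<Longrightarrow> b \<in> S \<Longrightarrow> a * b \<in> S"
    and x: "x \<in> S" "x \<noteq> 0"
  shows "x ^ card (S - {0}) = 1"
proof -
  let ?A = "S - {0}"
  have inj: "inj_on ((*) x) ?A" using x by (auto intro: inj_onI)
  have "(*) x ` ?A = ?A"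
    by (rule card_subset_eq) (use fin x mult card_image[OF inj] in auto)
  then have "prod id ?A = prod ((*) x) ?A"
    using prod.reindex[OF inj, of id] by simp
  also have "\<dots> = x ^ card ?A * prod id ?A" by (simp add: prod.distrib)
  finally show ?thesis using fin by (simp add: prod_zero_iff)
qed

lemma card_polys_degree_less:
  assumes "0 < d"
  shows "finite {r::bit poly. degree r < d}" and "card {r::bit poly. degree r < d} = 2 ^ d"
proof -
  let ?L = "{xs::bit list. length xs = d}"
  have bij: "bij_betw Poly ?L {r. degree r < d}"
  proof (rule bij_betw_imageI)
    show "inj_on Poly ?L"
    proof (rule inj_onI)
      fix xs ys :: "bit list"
      assume "xs \<in> ?L" "ys \<in> ?L" "Poly xs = Poly ys"
      then show "xs = ys"
        by (metis (mono_tags, lifting) mem_Collect_eq nth_default_nth coeff_Poly nth_equalityI)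
    qed
    show "Poly ` ?L = {r. degree r < d}"
    proof (intro equalityI subsetI)
      fix r assume "r \<in> Poly ` ?L"
      then obtain xs where "length xs = d" "r = Poly xs" by auto
      then have "\<forall>i\<ge>d. coeff r i = 0" by (simp add: coeff_Poly nth_default_def)
      then have "degree r \<le> d - 1" by (intro degree_le) auto
      then show "r \<in> {r. degree r < d}" using assms by simp
    next
      fix r :: "bit poly" assume "r \<in> {r. degree r < d}"
      then have "Poly (map (coeff r) [0..<d]) = r"
        by (intro poly_eqI) (auto simp: coeff_Poly nth_default_def coeff_eq_0)
      then show "r \<in> Poly ` ?L" by (intro image_eqI[of _ _ "map (coeff r) [0..<d]"]) auto
    qed
  qed
  have UNIV_bit: "UNIV = {0, 1::bit}" using bit.exhaust by auto
  have "finite (UNIV::bit set)" "card (UNIV::bit set) = 2" unfolding UNIV_bit by simp_all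
  then have "finite ?L" "card ?L = 2 ^ d"
    using card_lists_length_eq[of "UNIV::bit set" d] finite_lists_length_eq[of "UNIV::bit set" d]
    by simp_all
  with bij show "finite {r::bit poly. degree r < d}" "card {r::bit poly. degree r < d} = 2 ^ d"
    by (metis bij_betw_finite, metis bij_betw_same_card)
qed

lemma card_range_eval_F2:
  assumes char2: "CHAR('k::field) = 2" and irr: "irreducible P" and root: "eval_F2 P (x::'k) = 0"
  shows "finite (range (\<lambda>r. eval_F2 r x))" and "card (range (\<lambda>r. eval_F2 r x)) = 2 ^ degree P"
proof -
  let ?ev = "\<lambda>r. eval_F2 r x"
  have P0: "P \<noteq> 0" and deg_pos: "0 < degree P"
    using irr irreducible_degree_pos by auto
  have deg_mod: "degree (r mod P) < degree P" for r
    using degree_mod_less[OF P0, of r] deg_pos by auto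
  have "?ev r = ?ev (r mod P)" for r
    using root by (simp add: eval_F2_diff[OF char2] eval_F2_mult[OF char2] flip: minus_div_mult_eq_mod)
  then have range_eq: "range ?ev = ?ev ` {r. degree r < degree P}"
    using deg_mod by blast
  have "inj_on ?ev {r. degree r < degree P}"
  proof (rule inj_onI)
    fix r s assume r: "r \<in> {r. degree r < degree P}" and s: "s \<in> {r. degree r < degree P}"
      and eq: "?ev r = ?ev s"
    have "P dvd r - s"
      using eq eval_F2_eq_0_iff_dvd[OF char2 irr root, of "r - s"] by (simp add: eval_F2_diff[OF char2])
    moreover have "degree (r - s) < degree P" using r s by (simp add: degree_diff_less)
    ultimately have "r - s = 0" using dvd_imp_degree_le[of P "r - s"] by (cases "r - s = 0") simp_all
    then show "r = s" by simp
  qed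
  then show "finite (range ?ev)" "card (range ?ev) = 2 ^ degree P"
    unfolding range_eq using card_polys_degree_less[OF deg_pos] by (simp_all add: card_image)
qed

lemma root_power_two_pow_degree:
  assumes char2: "CHAR('k::field) = 2" and irr: "irreducible P" and root: "eval_F2 P (x::'k) = 0"
  shows "x ^ 2 ^ degree P = x"
proof (cases "x = 0")
  case False
  let ?S = "range (\<lambda>r. eval_F2 r x)"
  have "x \<in> ?S" using rangeI[of "\<lambda>r. eval_F2 r x" "[:0, 1:]"] by simp
  moreover have "0 \<in> ?S" using rangeI[of "\<lambda>r. eval_F2 r x" 0] by simp
  moreover have "a * b \<in> ?S" if "a \<in> ?S" "b \<in> ?S" for a b
    using that by (auto simp flip: eval_F2_mult[OF char2])
  ultimately have "x ^ (2 ^ degree P - 1) = 1"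
    using power_card_nonzero_eq_1[of ?S x] card_range_eval_F2[OF assms] False
    by (simp add: card_Diff_singleton)
  then show ?thesis by (metis power_minus_mult mult_1 zero_less_numeral zero_less_power)
qed simp

lemma is_subfield_Frobenius_fixed_points:
  assumes "CHAR('k::field) = 2"
  shows "is_subfield {x::'k. x ^ 2 ^ t = x}"
  unfolding is_subfield_def
  by (simp add: power_mult_distrib power_inverse Frobenius_add[OF assms] uminus_CHAR_2[OF assms])

lemma splitting_field_card_le:
  assumes split: "splitting_field_F2 P TYPE('k::field)" and irr: "irreducible P"
    and root: "eval_F2 P (x::'k) = 0" and fixed: "x ^ 2 ^ t = x" and "0 < t"
  shows "finite (UNIV :: 'k set)" and "card (UNIV :: 'k set) \<le> 2 ^ t"
proof -
  have char2: "CHAR('k) = 2" using split by (simp add: splitting_field_F2_def)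
  define F where "F = monom 1 (2 ^ t) - [:0, 1::bit:]"
  have eval_F: "eval_F2 F y = y ^ 2 ^ t - y" for y :: 'k
    by (simp add: F_def eval_F2_diff[OF char2] eval_F2_monom)
  have "P dvd F" using eval_F2_eq_0_iff_dvd[OF char2 irr root, of F] eval_F fixed by simp
  then have "{y::'k. eval_F2 P y = 0} \<subseteq> {y. eval_F2 F y = 0}"
    by (auto simp: eval_F2_mult[OF char2] elim!: dvdE)
  then have fixed_UNIV: "{y. eval_F2 F y = (0::'k)} = UNIV"
    using split is_subfield_Frobenius_fixed_points[OF char2, of t]
    unfolding splitting_field_F2_def eval_F by simp
  have "1 < (2::nat) ^ t" using one_less_power[of "2::nat" t] \<open>0 < t\<close> by simp
  then have "coeff (map_poly F2_emb F) (2 ^ t) = (1::'k)"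
    by (simp add: F_def coeff_map_poly coeff_monom coeff_eq_0)
  then have F0: "map_poly F2_emb F \<noteq> (0 :: 'k poly)" by auto
  have "degree F \<le> 2 ^ t" unfolding F_def by (intro degree_diff_le) (simp_all add: degree_monom_le)
  then show "finite (UNIV :: 'k set)" and "card (UNIV :: 'k set) \<le> 2 ^ t"
    using poly_roots_finite[OF F0] card_poly_roots_bound[OF F0] fixed_UNIV by simp_all
qed

lemma card_splitting_field:
  assumes split: "splitting_field_F2 P TYPE('k::field)" and irr: "irreducible P"
    and root: "eval_F2 P (x::'k) = 0"
  shows "finite (UNIV :: 'k set)" and "card (UNIV :: 'k set) = 2 ^ degree P"
proof -
  have char2: "CHAR('k) = 2" using split by (simp add: splitting_field_F2_def)
  have fin: "finite (UNIV :: 'k set)" and "card (UNIV :: 'k set) \<le> 2 ^ degree P"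
    using splitting_field_card_le[OF split irr root root_power_two_pow_degree[OF char2 irr root]]
      irreducible_degree_pos[OF irr] by simp_all
  moreover have "2 ^ degree P \<le> card (UNIV :: 'k set)"
    using card_range_eval_F2[OF char2 irr root] card_mono[OF fin subset_UNIV] by metis
  ultimately show "finite (UNIV :: 'k set)" and "card (UNIV :: 'k set) = 2 ^ degree P" by simp_all
qed

lemma inj_on_conjugates:
  assumes split: "splitting_field_F2 P TYPE('k::field)" and irr: "irreducible P"
    and root: "eval_F2 P (x::'k) = 0"
  shows "inj_on (\<lambda>j. x ^ 2 ^ j) {..<degree P}"
proof (rule linorder_inj_onI', rule notI)
  fix i j assume "i \<in> {..<degree P}" "j \<in> {..<degree P}" "i < j" and eq: "x ^ 2 ^ i = x ^ 2 ^ j"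
  define t where "t = i + (degree P - j)"
  have char2: "CHAR('k) = 2" using split by (simp add: splitting_field_F2_def)
  have "x ^ 2 ^ t = (x ^ 2 ^ i) ^ 2 ^ (degree P - j)"
    by (simp add: t_def power_add power_mult)
  also have "\<dots> = x ^ 2 ^ (j + (degree P - j))"
    by (simp only: eq power_add power_mult)
  also have "\<dots> = x" using \<open>j \<in> {..<degree P}\<close> root_power_two_pow_degree[OF char2 irr root] by simp
  finally have "card (UNIV :: 'k set) \<le> 2 ^ t"
    using splitting_field_card_le[OF split irr root] \<open>i < j\<close> \<open>j \<in> {..<degree P}\<close> by (simp add: t_def)
  moreover have "(2::nat) ^ t < 2 ^ degree P"
    using \<open>i < j\<close> \<open>j \<in> {..<degree P}\<close> by (simp add: t_def)
  ultimately show False using card_splitting_field(2)[OF split irr root] by simp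
qed

lemma splitting_field_F2_ex_root:
  assumes "splitting_field_F2 P TYPE('k::field)" and "0 < degree P"
  shows "\<exists>x::'k. eval_F2 P x = 0"
proof -
  obtain rs :: "'k list"
    where rs: "map_poly F2_emb P = Polynomial.smult (F2_emb (lead_coeff P)) (\<Prod>r\<leftarrow>rs. [:- r, 1:])"
    using assms(1) unfolding splitting_field_F2_def by blast
  show ?thesis
  proof (cases rs)
    case Nil
    then show ?thesis using arg_cong[OF rs, of degree] assms(2) by simp
  next
    case (Cons r _)
    then show ?thesis using rs by auto
  qed
qed

section \<open>Multiplicative order and primitivity\<close>

definition mult_ord :: "'a::monoid_mult \<Rightarrow> nat" where
  "mult_ord x = (LEAST d. 0 < d \<and> x ^ d = 1)"

lemma power_eq_1_iff_mult_ord_dvd: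
  fixes x :: "'a::monoid_mult"
  assumes "x ^ N = 1" and "0 < N"
  shows "x ^ e = 1 \<longleftrightarrow> mult_ord x dvd e"
proof -
  let ?P = "\<lambda>d. 0 < d \<and> x ^ d = 1"
  have ord: "?P (mult_ord x)"
    unfolding mult_ord_def by (rule LeastI[of ?P N]) (use assms in simp)
  have "x ^ e = x ^ (mult_ord x * (e div mult_ord x) + e mod mult_ord x)" by simp
  also have "\<dots> = x ^ (e mod mult_ord x)" using ord by (simp only: power_add power_mult) simp
  finally have "x ^ e = x ^ (e mod mult_ord x)" .
  moreover have "x ^ (e mod mult_ord x) \<noteq> 1" if "e mod mult_ord x \<noteq> 0"
    using not_less_Least[of "e mod mult_ord x" ?P] ord that by (simp add: mult_ord_def)
  ultimately show ?thesis by (auto simp: dvd_eq_mod_eq_0)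
qed

lemma power_div_prime_ne_1:
  assumes ord: "\<And>e. x ^ e = 1 \<longleftrightarrow> N dvd e" and "0 < N" and "prime p" and "p dvd N"
  shows "x ^ (N div p) \<noteq> 1"
proof
  assume "x ^ (N div p) = 1"
  then have "N dvd N div p" using ord by blast
  moreover have "0 < N div p" using assms(2,4) by (metis dvd_div_eq_0_iff neq0_conv)
  moreover have "N div p < N" using div_less_dividend[OF prime_gt_1_nat[OF assms(3)] assms(2)] .
  ultimately show False by (auto dest: dvd_imp_le)
qed

lemma mult_ord_eq_iff_power_div_prime_ne_1:
  fixes x :: "'a::monoid_mult"
  assumes "x ^ N = 1" and "0 < N"
  shows "mult_ord x = N \<longleftrightarrow> (\<forall>p. prime p \<and> p dvd N \<longrightarrow> x ^ (N div p) \<noteq> 1)"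
proof
  assume "mult_ord x = N"
  then have ord: "x ^ e = 1 \<longleftrightarrow> N dvd e" for e using power_eq_1_iff_mult_ord_dvd[OF assms] by simp
  show "\<forall>p. prime p \<and> p dvd N \<longrightarrow> x ^ (N div p) \<noteq> 1"
    using power_div_prime_ne_1[OF ord assms(2)] by blast
next
  assume no_root: "\<forall>p. prime p \<and> p dvd N \<longrightarrow> x ^ (N div p) \<noteq> 1"
  obtain c where c: "N = mult_ord x * c"
    using power_eq_1_iff_mult_ord_dvd[OF assms] assms(1) by blast
  show "mult_ord x = N"
  proof (rule ccontr)
    assume "mult_ord x \<noteq> N"
    then have "c \<noteq> 1" using c by auto
    then obtain p where p: "prime p" "p dvd c" using prime_factor_nat by blast
    then have "p dvd N" and "N div p = mult_ord x * (c div p)"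
      using c by (simp_all add: div_mult_swap)
    then have "x ^ (N div p) = 1" using power_eq_1_iff_mult_ord_dvd[OF assms] by simp
    with no_root p(1) \<open>p dvd N\<close> show False by blast
  qed
qed

lemma power_card_units_eq_1:
  assumes "finite (UNIV :: 'k::field set)" and "(x::'k) \<noteq> 0"
  shows "x ^ card (UNIV - {0::'k}) = 1"
  using power_card_nonzero_eq_1[of UNIV x] assms by simp

lemma card_units_pos:
  assumes "finite (UNIV :: 'k::field set)"
  shows "0 < card (UNIV - {0::'k})"
proof -
  have "1 \<in> UNIV - {0::'k}" by simp
  then have "UNIV - {0::'k} \<noteq> {}" by blast
  moreover have "finite (UNIV - {0::'k})" using assms by simp
  ultimately show ?thesis using card_gt_0_iff by blast
qed

lemma generates_iff_mult_ord_eq_card: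
  fixes x :: "'k::field"
  assumes fin: "finite (UNIV :: 'k set)" and "x \<noteq> 0"
  shows "(\<forall>y. y \<noteq> 0 \<longrightarrow> (\<exists>k. y = x ^ k)) \<longleftrightarrow> mult_ord x = card (UNIV - {0::'k})"
proof -
  let ?N = "card (UNIV - {0::'k})" and ?d = "mult_ord x"
  have ord: "x ^ e = 1 \<longleftrightarrow> ?d dvd e" for e
    by (rule power_eq_1_iff_mult_ord_dvd[OF power_card_units_eq_1[OF assms] card_units_pos[OF fin]])
  then have "0 < ?d"
    using power_card_units_eq_1[OF assms] card_units_pos[OF fin] by (metis dvd_0_left_iff gr0I)
  have power_mod: "x ^ k = x ^ (k mod ?d)" for k
  proof -
    have "x ^ k = x ^ (?d * (k div ?d)) * x ^ (k mod ?d)" by (simp flip: power_add)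
    then show ?thesis using ord[of "?d * (k div ?d)"] by simp
  qed
  have powers: "range (\<lambda>k. x ^ k) = (\<lambda>k. x ^ k) ` {..<?d}"
  proof
    show "range (\<lambda>k. x ^ k) \<subseteq> (\<lambda>k. x ^ k) ` {..<?d}"
    proof
      fix y assume "y \<in> range (\<lambda>k. x ^ k)"
      then obtain k where "y = x ^ (k mod ?d)" using power_mod by auto
      moreover have "k mod ?d \<in> {..<?d}" using \<open>0 < ?d\<close> by simp
      ultimately show "y \<in> (\<lambda>k. x ^ k) ` {..<?d}" by blast
    qed
  qed auto
  have "inj_on (\<lambda>k. x ^ k) {..<?d}"
  proof (rule linorder_inj_onI', rule notI)
    fix i j assume "i \<in> {..<?d}" "j \<in> {..<?d}" "i < j" and "x ^ i = x ^ j"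
    have "x ^ i * x ^ (j - i) = x ^ j" using \<open>i < j\<close> by (simp flip: power_add)
    then have "x ^ i * x ^ (j - i) = x ^ i * 1" using \<open>x ^ i = x ^ j\<close> by simp
    then have "?d dvd j - i" using ord \<open>x \<noteq> 0\<close> by simp
    then show False using \<open>i < j\<close> \<open>j \<in> {..<?d}\<close> by (auto dest: dvd_imp_le)
  qed
  then have card_powers: "card (range (\<lambda>k. x ^ k)) = ?d" unfolding powers by (simp add: card_image)
  have sub: "range (\<lambda>k. x ^ k) \<subseteq> UNIV - {0}" using \<open>x \<noteq> 0\<close> by auto
  have "(\<forall>y. y \<noteq> 0 \<longrightarrow> (\<exists>k. y = x ^ k)) \<longleftrightarrow> range (\<lambda>k. x ^ k) = UNIV - {0}" using sub by auto
  also have "\<dots> \<longleftrightarrow> ?d = ?N" using card_subset_eq[OF _ sub] fin card_powers by auto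
  finally show ?thesis .
qed

lemma generates_iff_power_div_prime_ne_1:
  fixes x :: "'k::field"
  assumes "finite (UNIV :: 'k set)" and "x \<noteq> 0"
  shows "(\<forall>y. y \<noteq> 0 \<longrightarrow> (\<exists>k. y = x ^ k)) \<longleftrightarrow>
    (\<forall>p. prime p \<and> p dvd card (UNIV - {0::'k}) \<longrightarrow> x ^ (card (UNIV - {0::'k}) div p) \<noteq> 1)"
  unfolding generates_iff_mult_ord_eq_card[OF assms]
  by (rule mult_ord_eq_iff_power_div_prime_ne_1[OF power_card_units_eq_1[OF assms] card_units_pos[OF assms(1)]])

lemma generator_power_eq_1_iff:
  fixes x :: "'k::field"
  assumes fin: "finite (UNIV :: 'k set)" and gen: "\<forall>y. y \<noteq> 0 \<longrightarrow> (\<exists>k. y = x ^ k)"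
    and nontrivial: "card (UNIV - {0::'k}) \<noteq> 1"
  shows "x ^ e = 1 \<longleftrightarrow> card (UNIV - {0::'k}) dvd e"
proof -
  have "x \<noteq> 0"
  proof
    assume "x = 0"
    then have "UNIV - {0} = {1::'k}" using gen by (auto simp: power_0_left split: if_split_asm)
    then show False using nontrivial by simp
  qed
  then have "mult_ord x = card (UNIV - {0::'k})"
    using generates_iff_mult_ord_eq_card[OF fin] gen by blast
  then show ?thesis
    using power_eq_1_iff_mult_ord_dvd[OF power_card_units_eq_1[OF fin \<open>x \<noteq> 0\<close>] card_units_pos[OF fin]]
    by simp
qed

lemma primitive_F2_iff:
  assumes split: "splitting_field_F2 Q TYPE('k::field)" and irr: "irreducible Q"
    and root: "eval_F2 Q (\<mu>::'k) = 0"
  shows "primitive_F2 Q TYPE('k) \<longleftrightarrow>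
    (\<forall>p. prime p \<and> p dvd card (UNIV - {0::'k}) \<longrightarrow> \<mu> ^ (card (UNIV - {0::'k}) div p) \<noteq> 1)"
    (is "_ \<longleftrightarrow> ?primitive_root")
proof -
  have char2: "CHAR('k) = 2" using split by (simp add: splitting_field_F2_def)
  have fin: "finite (UNIV :: 'k set)" by (rule card_splitting_field(1)[OF split irr root])
  \<comment> \<open>A root \<open>0\<close> forces \<open>Q = X\<close> and \<open>K = \<bbbF>\<^sub>2\<close>, where both sides hold trivially.\<close>
  consider (trivial) "UNIV - {0} = {1::'k}" | (nonzero_roots) "\<forall>\<nu>::'k. eval_F2 Q \<nu> = 0 \<longrightarrow> \<nu> \<noteq> 0"
  proof (cases "eval_F2 Q (0::'k) = 0")
    case True
    then have "Q dvd [:0, 1:]" using eval_F2_eq_0_iff_dvd[OF char2 irr True, of "[:0, 1:]"] by simp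
    then have "degree Q \<le> 1" using dvd_imp_degree_le[of Q "[:0, 1:]"] by simp
    then have "card (UNIV :: 'k set) \<le> 2"
      using card_splitting_field(2)[OF split irr root] power_increasing[of "degree Q" 1 "2::nat"] by simp
    then have "card (UNIV - {0::'k}) \<le> card {1::'k}" using fin by (simp add: card_Diff_singleton)
    then have "{1} = UNIV - {0::'k}" using fin by (intro card_seteq) auto
    then show ?thesis using that(1) by simp
  qed (use that(2) in blast)
  then show ?thesis
  proof cases
    case trivial
    then have "y = \<nu> ^ 0" if "y \<noteq> 0" for y \<nu> :: 'k using that by auto
    moreover have "\<not> prime p" if "p dvd card (UNIV - {0::'k})" for p using trivial that by simp
    ultimately show ?thesis using irr unfolding primitive_F2_def by blast
  next
    case nonzero_roots
    have generates_iff: "(\<forall>y. y \<noteq> 0 \<longrightarrow> (\<exists>k. y = \<nu> ^ k)) \<longleftrightarrow> ?primitive_root"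
      if "eval_F2 Q \<nu> = 0" for \<nu> :: 'k
      using generates_iff_power_div_prime_ne_1[OF fin nonzero_roots[rule_format, OF that]]
        power_eq_1_iff_of_common_root[OF char2 char2 irr that root] by simp
    show ?thesis
    proof
      assume "primitive_F2 Q TYPE('k)"
      then have "\<forall>y. y \<noteq> 0 \<longrightarrow> (\<exists>k. y = \<mu> ^ k)" using root unfolding primitive_F2_def by blast
      then show ?primitive_root using generates_iff[OF root] by blast
    next
      assume ?primitive_root
      then show "primitive_F2 Q TYPE('k)" using generates_iff irr unfolding primitive_F2_def by blast
    qed
  qed
qed


section \<open>Roots and coefficients\<close>

lemma prod_linear_factors_dvd:
  fixes p :: "'a::field poly"
  assumes "finite A" and "\<And>a. a \<in> A \<Longrightarrow> poly p a = 0"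
  shows "(\<Prod>a\<in>A. [:- a, 1:]) dvd p"
  using assms
proof (induction A rule: finite_induct)
  case (insert a A)
  then obtain h where h: "p = (\<Prod>b\<in>A. [:- b, 1:]) * h" by (auto elim!: dvdE)
  have "poly (\<Prod>b\<in>A. [:- b, 1:]) a \<noteq> 0" using insert.hyps by (simp add: poly_prod)
  moreover have "poly p a = 0" using insert.prems by simp
  ultimately have "poly h a = 0" using h by simp
  then have "[:- a, 1:] dvd h" by (simp add: poly_eq_0_iff_dvd)
  then have "[:- a, 1:] * (\<Prod>b\<in>A. [:- b, 1:]) dvd h * (\<Prod>b\<in>A. [:- b, 1:])"
    by (rule mult_dvd_mono) simp
  then show ?case using insert.hyps h by (simp add: mult.commute)
qed simp

lemma poly_0_eq_prod_roots:
  fixes p :: "'a::field poly"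
  assumes deg: "degree p = n" and monic: "coeff p n = 1" and inj: "inj_on r {..<n}"
    and roots: "\<And>j. j < n \<Longrightarrow> poly p (r j) = 0"
  shows "poly p 0 = (\<Prod>j<n. - r j)"
proof -
  let ?P = "\<Prod>j<n. [:- r j, 1:]"
  have "(\<Prod>a\<in>r ` {..<n}. [:- a, 1:]) dvd p" by (rule prod_linear_factors_dvd) (use roots in auto)
  then obtain h where h: "p = ?P * h" by (auto simp: prod.reindex[OF inj] elim!: dvdE)
  have P: "degree ?P = n" "coeff ?P n = 1"
    using degree_prod_monic[of n "\<lambda>j. [:- r j, 1:]"] by (simp_all add: atLeast0LessThan)
  have "h \<noteq> 0" using h monic by auto
  then have deg_h: "degree h = 0" using h deg P by (auto simp: degree_mult_eq)
  have "lead_coeff h = lead_coeff p" using h P by (simp add: lead_coeff_mult)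
  then have "lead_coeff h = 1" using deg monic by simp
  with deg_h have "h = 1" by (metis degree_0_id pCons_one)
  then show ?thesis using h by (simp add: poly_prod)
qed

lemma power_diff_1_eq_nat:
  assumes "0 < q"
  shows "q ^ n - 1 = (q - 1) * (\<Sum>i<n. q ^ i :: nat)"
proof -
  have "1 \<le> q" "1 \<le> q ^ n" using assms by simp_all
  then have "int (q ^ n - 1) = int ((q - 1) * (\<Sum>i<n. q ^ i))"
    using power_diff_1_eq[of "int q" n] by (simp add: of_nat_diff)
  then show ?thesis by (simp only: of_nat_eq_iff)
qed

section \<open>The polynomial \<open>Q\<close>\<close>

locale composed_poly =
  fixes fT fS Q :: "bit poly" and m n :: nat
  assumes degree_fT: "degree fT = m" and monic_fT: "coeff fT m = 1"
    and n_pos: "0 < n" and degree_fS: "degree fS < n" and fS_0: "coeff fS 0 = 1"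
    and Q_def: "Q = (\<Sum>i\<le>m. Polynomial.smult (coeff fT i) (monom 1 (n * i) * fS ^ (m - i)))"
begin

lemma degree_Q: "degree Q = n * m"
proof -
  define t where "t i = Polynomial.smult (coeff fT i) (monom 1 (n * i) * fS ^ (m - i))" for i
  have Q_split: "Q = monom 1 (n * m) + (\<Sum>i<m. t i)"
    using monic_fT by (simp add: Q_def t_def flip: lessThan_Suc_atMost)
  have degree_t: "degree (t i) < n * m" if "i < m" for i
  proof -
    have "degree (t i) \<le> n * i + degree fS * (m - i)"
      unfolding t_def
      by (intro order.trans[OF degree_smult_le] order.trans[OF degree_mult_le] add_mono
          order.trans[OF degree_power_le]) (simp_all add: degree_monom_le mult.commute)
    also have "\<dots> < n * i + n * (m - i)" using degree_fS that by simp
    also have "\<dots> = n * m" using that by (simp flip: add_mult_distrib2)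
    finally show ?thesis .
  qed
  show ?thesis
  proof (cases "m = 0")
    case False
    have "degree (t i) \<le> n * m - 1" if "i < m" for i using degree_t[OF that] by linarith
    then have "degree (\<Sum>i<m. t i) \<le> n * m - 1" by (intro degree_sum_le) simp_all
    moreover have "0 < n * m" using False n_pos by simp
    ultimately have "degree (\<Sum>i<m. t i) < n * m" by linarith
    then show ?thesis by (simp add: Q_split degree_add_eq_left degree_monom_eq)
  qed (simp add: Q_split)
qed

lemma eval_Q_sum:
  assumes "CHAR('k::field) = 2"
  shows "eval_F2 Q (y::'k) = (\<Sum>i\<le>m. F2_emb (coeff fT i) * y ^ (n * i) * eval_F2 fS y ^ (m - i))"
  by (simp add: Q_def eval_F2_sum eval_F2_smult eval_F2_mult eval_F2_monom eval_F2_power assms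
      mult.assoc)

lemma eval_Q:
  assumes char2: "CHAR('k::field) = 2" and s: "eval_F2 fS (y::'k) \<noteq> 0"
  shows "eval_F2 Q y = eval_F2 fS y ^ m * eval_F2 fT (y ^ n / eval_F2 fS y)"
proof -
  let ?s = "eval_F2 fS y"
  have "?s ^ m * eval_F2 fT (y ^ n / ?s) = (\<Sum>i\<le>m. ?s ^ m * (F2_emb (coeff fT i) * (y ^ n / ?s) ^ i))"
    by (simp add: poly_altdef coeff_map_poly degree_fT sum_distrib_left)
  also have "\<dots> = (\<Sum>i\<le>m. F2_emb (coeff fT i) * y ^ (n * i) * ?s ^ (m - i))"
  proof (intro sum.cong refl)
    fix i assume "i \<in> {..m}"
    then have "?s ^ m = ?s ^ i * ?s ^ (m - i)" by (simp flip: power_add)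
    then show "?s ^ m * (F2_emb (coeff fT i) * (y ^ n / ?s) ^ i)
        = F2_emb (coeff fT i) * y ^ (n * i) * ?s ^ (m - i)"
      using s by (simp add: power_divide power_mult)
  qed
  finally show ?thesis by (simp add: eval_Q_sum[OF char2])
qed

lemma fT_root_at_Q_root:
  assumes char2: "CHAR('k::field) = 2" and root: "eval_F2 Q (\<mu>::'k) = 0"
  shows "eval_F2 fS \<mu> \<noteq> 0" and "eval_F2 fT (\<mu> ^ n / eval_F2 fS \<mu>) = 0"
proof -
  show s: "eval_F2 fS \<mu> \<noteq> 0"
  proof
    assume s0: "eval_F2 fS \<mu> = 0"
    have "eval_F2 Q \<mu> = (\<Sum>i\<le>m. if i = m then \<mu> ^ (n * m) else 0)"
      unfolding eval_Q_sum[OF char2] s0 by (intro sum.cong refl) (auto simp: monic_fT)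
    then have "\<mu> = 0" using root by simp
    then show False using s0 fS_0 by (simp add: eval_F2_0_point)
  qed
  show "eval_F2 fT (\<mu> ^ n / eval_F2 fS \<mu>) = 0" using eval_Q[OF char2 s] root s by simp
qed

lemma Q_root_quotient_eq_norm:
  assumes split: "splitting_field_F2 Q TYPE('k::field)" and irr_Q: "irreducible Q"
    and irr_fT: "irreducible fT" and root: "eval_F2 Q (\<mu>::'k) = 0"
  shows "\<mu> ^ n / eval_F2 fS \<mu> = \<mu> ^ (\<Sum>j<n. (2 ^ m) ^ j)"
proof -
  have char2: "CHAR('k) = 2" using split by (simp add: splitting_field_F2_def)
  define s where "s = eval_F2 fS \<mu>"
  define \<gamma> where "\<gamma> = \<mu> ^ n / s"
  have s0: "s \<noteq> 0" and \<gamma>_root: "eval_F2 fT \<gamma> = 0"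
    using fT_root_at_Q_root[OF char2 root] by (simp_all add: s_def \<gamma>_def)
  have m_pos: "0 < m" using irreducible_degree_pos[OF irr_fT] degree_fT by simp
  have \<gamma>_fixed: "\<gamma> ^ 2 ^ (m * j) = \<gamma>" for j
  proof (induction j)
    case (Suc j)
    have "\<gamma> ^ 2 ^ (m * Suc j) = (\<gamma> ^ 2 ^ m) ^ 2 ^ (m * j)"
      by (simp only: mult_Suc_right power_add power_mult)
    then show ?case using Suc root_power_two_pow_degree[OF char2 irr_fT \<gamma>_root] degree_fT by simp
  qed simp
  \<comment> \<open>\<open>g\<close> has coefficients fixed by \<open>x \<mapsto> x ^ 2 ^ m\<close>, so it vanishes at the conjugates
    \<open>\<mu> ^ 2 ^ (m * j)\<close>; its constant term is \<open>\<gamma>\<close>.\<close>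
  define g :: "'k poly" where "g = monom 1 n + Polynomial.smult \<gamma> (map_poly F2_emb fS)"
  have poly_g: "poly g z = z ^ n + \<gamma> * eval_F2 fS z" for z
    unfolding g_def by (simp only: poly_add poly_smult poly_monom mult_1)
  have power_swap: "(\<mu> ^ 2 ^ k) ^ n = (\<mu> ^ n) ^ 2 ^ k" for k
    by (simp only: mult.commute flip: power_mult)
  have \<gamma>_s: "\<gamma> * s = \<mu> ^ n" using s0 by (simp add: \<gamma>_def)
  have g_roots: "poly g (\<mu> ^ 2 ^ (m * j)) = 0" for j
  proof -
    have "poly g (\<mu> ^ 2 ^ (m * j)) = (\<mu> ^ 2 ^ (m * j)) ^ n + \<gamma> * eval_F2 fS (\<mu> ^ 2 ^ (m * j))"
      by (rule poly_g)
    also have "\<dots> = (\<mu> ^ n) ^ 2 ^ (m * j) + \<gamma> ^ 2 ^ (m * j) * s ^ 2 ^ (m * j)"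
      by (simp only: power_swap \<gamma>_fixed s_def eval_F2_Frobenius[OF char2])
    also have "\<dots> = (\<mu> ^ n + \<gamma> * s) ^ 2 ^ (m * j)"
      by (simp add: Frobenius_add[OF char2] power_mult_distrib)
    also have "\<mu> ^ n + \<gamma> * s = 0"
      unfolding \<gamma>_s by (rule CHAR_2_add_self[OF char2])
    finally show ?thesis by simp
  qed
  have conjugates_inj: "inj_on (\<lambda>j. \<mu> ^ 2 ^ j) {..<m * n}"
    using inj_on_conjugates[OF split irr_Q root] degree_Q by (simp add: mult.commute)
  have inj: "inj_on (\<lambda>j. \<mu> ^ 2 ^ (m * j)) {..<n}"
  proof (rule inj_onI)
    fix i j assume "i \<in> {..<n}" "j \<in> {..<n}" "\<mu> ^ 2 ^ (m * i) = \<mu> ^ 2 ^ (m * j)"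
    then have "m * i = m * j"
      using inj_onD[OF conjugates_inj \<open>\<mu> ^ 2 ^ (m * i) = \<mu> ^ 2 ^ (m * j)\<close>] m_pos by simp
    then show "i = j" using m_pos by simp
  qed
  have "degree (Polynomial.smult \<gamma> (map_poly F2_emb fS)) < n"
    using degree_smult_le[of \<gamma> "map_poly F2_emb fS"] degree_fS by simp
  then have deg_g: "degree g = n" and monic_g: "coeff g n = 1"
    using degree_fS by (simp_all add: g_def degree_add_eq_left degree_monom_eq coeff_map_poly coeff_eq_0)
  have "\<gamma> = poly g 0" using n_pos fS_0 by (simp add: poly_g eval_F2_0_point)
  also have "\<dots> = (\<Prod>j<n. - (\<mu> ^ 2 ^ (m * j)))"
    by (rule poly_0_eq_prod_roots[OF deg_g monic_g inj g_roots])
  also have "\<dots> = \<mu> ^ (\<Sum>j<n. (2 ^ m) ^ j)"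
    by (simp add: uminus_CHAR_2[OF char2] power_sum power_mult)
  finally show ?thesis by (simp add: \<gamma>_def s_def)
qed

lemma card_units_splitting_field_Q:
  assumes split: "splitting_field_F2 Q TYPE('k::field)" and irr_Q: "irreducible Q"
    and root: "eval_F2 Q (\<mu>::'k) = 0"
  shows "card (UNIV - {0::'k}) = (2 ^ m - 1) * (\<Sum>j<n. (2 ^ m) ^ j)"
proof -
  have "card (UNIV :: 'k set) = (2 ^ m) ^ n"
    using card_splitting_field(2)[OF split irr_Q root] degree_Q by (simp add: power_mult mult.commute)
  then have "card (UNIV - {0::'k}) = (2 ^ m) ^ n - 1"
    using card_splitting_field(1)[OF split irr_Q root] by (simp add: card_Diff_singleton)
  also have "\<dots> = (2 ^ m - 1) * (\<Sum>j<n. (2 ^ m) ^ j)" by (intro power_diff_1_eq_nat) simp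
  finally show ?thesis .
qed

lemma Q_root_power_ne_1:
  assumes split_L: "splitting_field_F2 fT TYPE('l::field)" and prim: "primitive_F2 fT TYPE('l)"
    and split_K: "splitting_field_F2 Q TYPE('k::field)" and irr_Q: "irreducible Q"
    and root: "eval_F2 Q (\<mu>::'k) = 0"
    and p: "prime p" "p dvd card (UNIV - {0::'l})"
  shows "\<mu> ^ (card (UNIV - {0::'k}) div p) \<noteq> 1"
proof -
  define q where "q = (2::nat) ^ m"
  define N where "N = (\<Sum>j<n. q ^ j)"
  have irr_fT: "irreducible fT" using prim by (simp add: primitive_F2_def)
  have char_L: "CHAR('l) = 2" and char_K: "CHAR('k) = 2"
    using split_L split_K by (simp_all add: splitting_field_F2_def)
  have q_gt_1: "1 < q"
    using irreducible_degree_pos[OF irr_fT] degree_fT one_less_power[of "2::nat" m] by (simp add: q_def)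
  obtain \<beta> :: 'l where \<beta>: "eval_F2 fT \<beta> = 0"
    using splitting_field_F2_ex_root[OF split_L irreducible_degree_pos[OF irr_fT]] by blast
  have fin_L: "finite (UNIV :: 'l set)" and card_L: "card (UNIV - {0::'l}) = q - 1"
    using card_splitting_field[OF split_L irr_fT \<beta>] degree_fT by (simp_all add: q_def card_Diff_singleton)
  have card_K: "card (UNIV - {0::'k}) = (q - 1) * N"
    unfolding q_def N_def by (rule card_units_splitting_field_Q[OF split_K irr_Q root])
  have gen: "\<forall>y. y \<noteq> 0 \<longrightarrow> (\<exists>k. y = \<beta> ^ k)"
    using prim \<beta> unfolding primitive_F2_def by blast
  have "card (UNIV - {0::'l}) \<noteq> 1" using p by auto
  then have "\<beta> ^ e = 1 \<longleftrightarrow> (q - 1) dvd e" for e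
    using generator_power_eq_1_iff[OF fin_L gen] card_L by simp
  moreover have norm_root: "eval_F2 fT (\<mu> ^ N) = 0"
    using fT_root_at_Q_root(2)[OF char_K root] Q_root_quotient_eq_norm[OF split_K irr_Q irr_fT root]
    by (simp add: N_def q_def)
  ultimately have "(\<mu> ^ N) ^ e = 1 \<longleftrightarrow> (q - 1) dvd e" for e
    using power_eq_1_iff_of_common_root[OF char_K char_L irr_fT norm_root \<beta>] by simp
  then have "(\<mu> ^ N) ^ ((q - 1) div p) \<noteq> 1"
    by (rule power_div_prime_ne_1) (use q_gt_1 p card_L in auto)
  moreover have "card (UNIV - {0::'k}) div p = N * ((q - 1) div p)"
    using card_K p card_L by (simp add: div_mult_swap mult.commute)
  ultimately show ?thesis by (simp add: power_mult)
qed

end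

theorem mainTheorem9:
  fixes T :: "bit mat" and m n :: nat and a :: "nat \<Rightarrow> bit"
    and \<mu> :: "'k::field" and Q :: "bit poly"
  assumes T: "T \<in> carrier_mat m m"
    and L: "splitting_field_F2 (char_poly T) TYPE('l::field)"
    and prim: "primitive_F2 (char_poly T) TYPE('l)"
    and n: "0 < n" and a0: "a 0 \<noteq> 0"
    and Q_def: "Q = (\<Sum>i\<le>m. Polynomial.smult (coeff (char_poly T) i)
                       (monom 1 (n * i) * (\<Sum>j<n. monom (a j) j) ^ (m - i)))"
    and irr: "irreducible Q"
    and K: "splitting_field_F2 Q TYPE('k)"
    and root: "poly (map_poly F2_emb Q) \<mu> = 0"
  shows "(\<forall>p::nat. prime p \<and> p dvd card (UNIV - {0::'l}) \<longrightarrow>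
            \<mu> ^ (card (UNIV - {0::'k}) div p) \<noteq> 1)
       \<and> (primitive_F2 Q TYPE('k) \<longleftrightarrow>
            (\<forall>p::nat. prime p \<and> p dvd card (UNIV - {0::'k}) \<and> \<not> p dvd card (UNIV - {0::'l}) \<longrightarrow>
               \<mu> ^ (card (UNIV - {0::'k}) div p) \<noteq> 1))"
proof -
  define fS where "fS = (\<Sum>j<n. monom (a j) j)"
  have "degree fS \<le> n - 1"
    unfolding fS_def by (rule degree_sum_le) (auto intro: order.trans[OF degree_monom_le])
  moreover have "coeff fS 0 = 1" using n a0 by (simp add: fS_def coeff_sum coeff_monom)
  ultimately interpret composed_poly "char_poly T" fS Q m n
    using degree_monic_char_poly[OF T] n Q_def by unfold_locales (simp_all add: fS_def)
  have "\<forall>p. prime p \<and> p dvd card (UNIV - {0::'l}) \<longrightarrow> \<mu> ^ (card (UNIV - {0::'k}) div p) \<noteq> 1"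
    using Q_root_power_ne_1[OF L prim K irr root] by blast
  then show ?thesis unfolding primitive_F2_iff[OF K irr root] by blast
qed

end
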